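(* Let $\pi=(O,h)$ be the complete prefix unfolding of a bounded net system and let $e_1,e_2$ be events of $\pi$. If $e_1\triangleright e_2$, then $e_1<_{ear}e_2$.
   Context: Occurrence net $O=(C,E,G)$ (conditions $C$, events $E$); $x<y$ iff there is a directed path with at least one arc from $x$ to $y$. For a set of nodes $Y$, $\bullet Y=\bigcup_{y\in Y}\bullet y$; thus $\bullet(\bullet e)$ is the set of events having an output condition in the preset of $e$. For a set of events $E_0$, $Max(E_0)=\{e\in E_0\mid\forall e'\in E_0:e\not<e'\}$. Max-Event Adjacency: for events $e_1<e_2$, $e_1\triangleright e_2$ iff $e_1\in Max(\bullet(\bullet e_2))$. A bounded net system is one whose reachable markings are uniformly bounded; $\pi=(O,h)$ is its complete prefix unfolding in the sense of McMillan/Esparza ($h$ maps conditions to places and events to transitions; the prefix is the greatest backward closed subnet of the unfolding containing no events after a cut-off event). The prefix is viewed as a net whose initial marking marks exactly the minimal conditions; its reachable markings are the sets $Cut(\mathcal C)=(Min(O)\cup\mathcal C\bullet)\setminus\bullet\mathcal C$ for configurations $\mathcal C$ (conflict-free backward closed sets of events). Event adjacency relation: $e_1<_{ear}e_2$ iff there exist reachable markings $M_1,M_1',M_2,M_2'$ of $\pi$ with $M_1\xrightarrow{e_1}M_1'$, $M_2\xrightarrow{e_2}M_2'$ and $h(M_2)=h(M_1')$. *)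

theory Defs
  imports Main
begin

text \<open>A net system is given by a finite set of places P (type 'p), a finite set
of transitions T (type 't), the arcs place-to-transition Fin and
transition-to-place Fout (flow relation F = Fin \<union> Fout), and an initial
marking M0 (a multiset of places).\<close>

definition pret :: "('p \<times> 't) set \<Rightarrow> 't \<Rightarrow> 'p set" where
  "pret Fin t = {p. (p, t) \<in> Fin}"

definition postt :: "('t \<times> 'p) set \<Rightarrow> 't \<Rightarrow> 'p set" where
  "postt Fout t = {p. (t, p) \<in> Fout}"

definition net_system ::
  "'p set \<Rightarrow> 't set \<Rightarrow> ('p \<times> 't) set \<Rightarrow> ('t \<times> 'p) set \<Rightarrow> ('p \<Rightarrow> nat) \<Rightarrow> bool" where
  "net_system P T Fin Fout M0 \<longleftrightarrow>
     finite P \<and> finite T \<and> Fin \<subseteq> P \<times> T \<and> Fout \<subseteq> T \<times> P \<and> (\<forall>p. p \<notin> P \<longrightarrow> M0 p = 0)"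

definition enabled :: "('p \<times> 't) set \<Rightarrow> ('p \<Rightarrow> nat) \<Rightarrow> 't \<Rightarrow> bool" where
  "enabled Fin M t \<longleftrightarrow> (\<forall>p \<in> pret Fin t. 1 \<le> M p)"

definition fire :: "('p \<times> 't) set \<Rightarrow> ('t \<times> 'p) set \<Rightarrow> ('p \<Rightarrow> nat) \<Rightarrow> 't \<Rightarrow> ('p \<Rightarrow> nat)" where
  "fire Fin Fout M t = (\<lambda>p. M p - (if p \<in> pret Fin t then 1 else 0)
                              + (if p \<in> postt Fout t then 1 else 0))"

inductive reachable ::
  "'t set \<Rightarrow> ('p \<times> 't) set \<Rightarrow> ('t \<times> 'p) set \<Rightarrow> ('p \<Rightarrow> nat) \<Rightarrow> ('p \<Rightarrow> nat) \<Rightarrow> bool"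
  for T Fin Fout M0 where
    init: "reachable T Fin Fout M0 M0"
  | step: "reachable T Fin Fout M0 M \<Longrightarrow> t \<in> T \<Longrightarrow> enabled Fin M t \<Longrightarrow>
           reachable T Fin Fout M0 (fire Fin Fout M t)"

definition bounded_system ::
  "'t set \<Rightarrow> ('p \<times> 't) set \<Rightarrow> ('t \<times> 'p) set \<Rightarrow> ('p \<Rightarrow> nat) \<Rightarrow> bool" where
  "bounded_system T Fin Fout M0 \<longleftrightarrow>
     (\<exists>k::nat. \<forall>M. reachable T Fin Fout M0 M \<longrightarrow> (\<forall>p. M p \<le> k))"

definition preN :: "('n \<times> 'n) set \<Rightarrow> 'n \<Rightarrow> 'n set" where
  "preN G x = {y. (y, x) \<in> G}"

definition postN :: "('n \<times> 'n) set \<Rightarrow> 'n \<Rightarrow> 'n set" where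
  "postN G x = {y. (x, y) \<in> G}"

definition preS :: "('n \<times> 'n) set \<Rightarrow> 'n set \<Rightarrow> 'n set" where
  "preS G Y = (\<Union>y\<in>Y. preN G y)"

definition postS :: "('n \<times> 'n) set \<Rightarrow> 'n set \<Rightarrow> 'n set" where
  "postS G Y = (\<Union>y\<in>Y. postN G y)"

definition lessN :: "('n \<times> 'n) set \<Rightarrow> 'n \<Rightarrow> 'n \<Rightarrow> bool" where
  "lessN G x y \<longleftrightarrow> (x, y) \<in> G\<^sup>+"

definition leqN :: "('n \<times> 'n) set \<Rightarrow> 'n \<Rightarrow> 'n \<Rightarrow> bool" where
  "leqN G x y \<longleftrightarrow> x = y \<or> lessN G x y"

definition conflict :: "'n set \<Rightarrow> ('n \<times> 'n) set \<Rightarrow> 'n \<Rightarrow> 'n \<Rightarrow> bool" where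
  "conflict E G x y \<longleftrightarrow>
     (\<exists>e1 e2. e1 \<in> E \<and> e2 \<in> E \<and> e1 \<noteq> e2 \<and> preN G e1 \<inter> preN G e2 \<noteq> {} \<and>
              leqN G e1 x \<and> leqN G e2 y)"

definition occurrence_net :: "'n set \<Rightarrow> 'n set \<Rightarrow> ('n \<times> 'n) set \<Rightarrow> bool" where
  "occurrence_net C E G \<longleftrightarrow>
     C \<inter> E = {} \<and> G \<subseteq> (C \<times> E) \<union> (E \<times> C) \<and>
     (\<forall>x. \<not> lessN G x x) \<and>
     (\<forall>c \<in> C. finite (preN G c) \<and> card (preN G c) \<le> 1) \<and>
     (\<forall>x. finite {y. lessN G y x}) \<and>
     (\<forall>x \<in> C \<union> E. \<not> conflict E G x x)"

definition MinO :: "'n set \<Rightarrow> ('n \<times> 'n) set \<Rightarrow> 'n set" where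
  "MinO C G = {c \<in> C. preN G c = {}}"

definition MaxE :: "('n \<times> 'n) set \<Rightarrow> 'n set \<Rightarrow> 'n set" where
  "MaxE G E0 = {e \<in> E0. \<forall>e' \<in> E0. \<not> lessN G e e'}"

definition max_adj :: "('n \<times> 'n) set \<Rightarrow> 'n \<Rightarrow> 'n \<Rightarrow> bool" where
  "max_adj G e1 e2 \<longleftrightarrow> lessN G e1 e2 \<and> e1 \<in> MaxE G (preS G (preN G e2))"

definition co_rel :: "'n set \<Rightarrow> ('n \<times> 'n) set \<Rightarrow> 'n \<Rightarrow> 'n \<Rightarrow> bool" where
  "co_rel E G x y \<longleftrightarrow> \<not> lessN G x y \<and> \<not> lessN G y x \<and> \<not> conflict E G x y"

definition co_set :: "'n set \<Rightarrow> ('n \<times> 'n) set \<Rightarrow> 'n set \<Rightarrow> bool" where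
  "co_set E G B \<longleftrightarrow> (\<forall>x \<in> B. \<forall>y \<in> B. x \<noteq> y \<longrightarrow> co_rel E G x y)"

definition hmark :: "('n \<Rightarrow> 'p) \<Rightarrow> 'n set \<Rightarrow> 'p \<Rightarrow> nat" where
  "hmark hC M p = card {c \<in> M. hC c = p}"

text \<open>The homomorphism h is split into its restriction hC to conditions
(into places) and hE to events (into transitions).\<close>

definition branching_process ::
  "'p set \<Rightarrow> 't set \<Rightarrow> ('p \<times> 't) set \<Rightarrow> ('t \<times> 'p) set \<Rightarrow> ('p \<Rightarrow> nat) \<Rightarrow>
   'n set \<Rightarrow> 'n set \<Rightarrow> ('n \<times> 'n) set \<Rightarrow> ('n \<Rightarrow> 'p) \<Rightarrow> ('n \<Rightarrow> 't) \<Rightarrow> bool" where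
  "branching_process P T Fin Fout M0 C E G hC hE \<longleftrightarrow>
     occurrence_net C E G \<and> hC ` C \<subseteq> P \<and> hE ` E \<subseteq> T \<and>
     (\<forall>e \<in> E. bij_betw hC (preN G e) (pret Fin (hE e)) \<and>
              bij_betw hC (postN G e) (postt Fout (hE e))) \<and>
     finite (MinO C G) \<and> (\<forall>p. hmark hC (MinO C G) p = M0 p) \<and>
     (\<forall>e1 \<in> E. \<forall>e2 \<in> E. preN G e1 = preN G e2 \<and> hE e1 = hE e2 \<longrightarrow> e1 = e2)"

text \<open>The unfolding: the maximal branching process, characterized (up to
isomorphism) as a branching process admitting no further possible extension.\<close>
definition is_unfolding ::
  "'p set \<Rightarrow> 't set \<Rightarrow> ('p \<times> 't) set \<Rightarrow> ('t \<times> 'p) set \<Rightarrow> ('p \<Rightarrow> nat) \<Rightarrow>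
   'n set \<Rightarrow> 'n set \<Rightarrow> ('n \<times> 'n) set \<Rightarrow> ('n \<Rightarrow> 'p) \<Rightarrow> ('n \<Rightarrow> 't) \<Rightarrow> bool" where
  "is_unfolding P T Fin Fout M0 C E G hC hE \<longleftrightarrow>
     branching_process P T Fin Fout M0 C E G hC hE \<and>
     (\<forall>t \<in> T. \<forall>B. B \<subseteq> C \<and> co_set E G B \<and> bij_betw hC B (pret Fin t) \<longrightarrow>
                 (\<exists>e \<in> E. preN G e = B \<and> hE e = t))"

definition configuration :: "'n set \<Rightarrow> ('n \<times> 'n) set \<Rightarrow> 'n set \<Rightarrow> bool" where
  "configuration E G K \<longleftrightarrow>
     K \<subseteq> E \<and> finite K \<and>
     (\<forall>e \<in> K. \<forall>e' \<in> E. lessN G e' e \<longrightarrow> e' \<in> K) \<and>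
     (\<forall>x \<in> K. \<forall>y \<in> K. \<not> conflict E G x y)"

definition Cut :: "'n set \<Rightarrow> ('n \<times> 'n) set \<Rightarrow> 'n set \<Rightarrow> 'n set" where
  "Cut C G K = (MinO C G \<union> postS G K) - preS G K"

definition loc :: "'n set \<Rightarrow> ('n \<times> 'n) set \<Rightarrow> 'n \<Rightarrow> 'n set" where
  "loc E G e = {e' \<in> E. leqN G e' e}"

text \<open>McMillan cut-off events (adequate order: size of local configurations).\<close>
definition cutoff :: "'n set \<Rightarrow> 'n set \<Rightarrow> ('n \<times> 'n) set \<Rightarrow> ('n \<Rightarrow> 'p) \<Rightarrow> 'n \<Rightarrow> bool" where
  "cutoff C E G hC e \<longleftrightarrow>
     e \<in> E \<and> (\<exists>e' \<in> E. hmark hC (Cut C G (loc E G e')) = hmark hC (Cut C G (loc E G e)) \<and>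
                        card (loc E G e') < card (loc E G e))"

definition complete_prefix ::
  "'n set \<Rightarrow> 'n set \<Rightarrow> ('n \<times> 'n) set \<Rightarrow> ('n \<Rightarrow> 'p) \<Rightarrow> 'n set \<times> 'n set \<times> ('n \<times> 'n) set" where
  "complete_prefix C E G hC =
     (let Ep = {e \<in> E. \<forall>e' \<in> E. lessN G e' e \<longrightarrow> \<not> cutoff C E G hC e'};
          Cp = {c \<in> C. \<forall>e \<in> preN G c. e \<in> Ep}
      in (Cp, Ep, G \<inter> ((Cp \<union> Ep) \<times> (Cp \<union> Ep))))"

definition reach_mark :: "'n set \<Rightarrow> 'n set \<Rightarrow> ('n \<times> 'n) set \<Rightarrow> 'n set \<Rightarrow> bool" where
  "reach_mark C E G M \<longleftrightarrow> (\<exists>K. configuration E G K \<and> M = Cut C G K)"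

definition occ_step :: "'n set \<Rightarrow> ('n \<times> 'n) set \<Rightarrow> 'n set \<Rightarrow> 'n \<Rightarrow> 'n set \<Rightarrow> bool" where
  "occ_step E G M e M' \<longleftrightarrow> e \<in> E \<and> preN G e \<subseteq> M \<and> M' = (M - preN G e) \<union> postN G e"

definition ear :: "'n set \<Rightarrow> 'n set \<Rightarrow> ('n \<times> 'n) set \<Rightarrow> ('n \<Rightarrow> 'p) \<Rightarrow> 'n \<Rightarrow> 'n \<Rightarrow> bool" where
  "ear C E G hC e1 e2 \<longleftrightarrow>
     (\<exists>M1 M1' M2 M2'. reach_mark C E G M1 \<and> reach_mark C E G M1' \<and>
        reach_mark C E G M2 \<and> reach_mark C E G M2' \<and>
        occ_step E G M1 e1 M1' \<and> occ_step E G M2 e2 M2' \<and> hmark hC M2 = hmark hC M1')"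

end

theory Submission
  imports Defs
begin

text \<open>Let K be the set of events strictly below e2. Every event below e2 lies below
some event of \<bullet>(\<bullet>e2), so max-event adjacency makes e1 a maximal element of K.
Hence K - {e1}, K and K \<union> {e2} are configurations, and the prefix can fire e1 from
Cut(K - {e1}) to Cut(K) and then e2 from Cut(K): the marking reached by e1 is
literally the one enabling e2.\<close>

definition past :: "'n set \<Rightarrow> ('n \<times> 'n) set \<Rightarrow> 'n \<Rightarrow> 'n set" where
  "past E G e = {e' \<in> E. lessN G e' e}"

lemma lessN_trans: "lessN G x y \<Longrightarrow> lessN G y z \<Longrightarrow> lessN G x z"
  unfolding lessN_def by auto

lemma leqN_trans: "leqN G x y \<Longrightarrow> leqN G y z \<Longrightarrow> leqN G x z"
  unfolding leqN_def using lessN_trans by metis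

lemma lessN_mono: "G' \<subseteq> G \<Longrightarrow> lessN G' x y \<Longrightarrow> lessN G x y"
  unfolding lessN_def by (rule trancl_mono)

lemma leqN_mono: "G' \<subseteq> G \<Longrightarrow> leqN G' x y \<Longrightarrow> leqN G x y"
  unfolding leqN_def using lessN_mono by metis

lemma conflict_leqN_mono:
  assumes "conflict E G x y" "leqN G x x'" "leqN G y y'"
  shows "conflict E G x' y'"
  using assms leqN_trans unfolding conflict_def by metis

lemma conflict_mono:
  assumes "E' \<subseteq> E" "G' \<subseteq> G" "conflict E' G' x y"
  shows "conflict E G x y"
proof -
  obtain e1 e2 where e: "e1 \<in> E'" "e2 \<in> E'" "e1 \<noteq> e2" "preN G' e1 \<inter> preN G' e2 \<noteq> {}"
    "leqN G' e1 x" "leqN G' e2 y"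
    using assms(3) unfolding conflict_def by blast
  have "preN G' e1 \<inter> preN G' e2 \<subseteq> preN G e1 \<inter> preN G e2"
    using assms(2) unfolding preN_def by auto
  then show ?thesis
    unfolding conflict_def using e assms(1) leqN_mono[OF assms(2)] by blast
qed

lemma
  assumes "occurrence_net C E G"
  shows occurrence_net_disjoint: "C \<inter> E = {}"
    and occurrence_net_arcs: "G \<subseteq> C \<times> E \<union> E \<times> C"
    and occurrence_net_irrefl: "\<not> lessN G x x"
    and occurrence_net_finite_past: "finite {y. lessN G y x}"
    and occurrence_net_no_self_conflict: "x \<in> C \<union> E \<Longrightarrow> \<not> conflict E G x x"
  using assms by (simp_all add: occurrence_net_def)

lemma occurrence_net_restrict:
  assumes occ: "occurrence_net C E G" and "C' \<subseteq> C" "E' \<subseteq> E"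
  shows "occurrence_net C' E' (G \<inter> ((C' \<union> E') \<times> (C' \<union> E')))"
    (is "occurrence_net C' E' ?G'")
  unfolding occurrence_net_def
proof (intro conjI allI ballI)
  have sub: "?G' \<subseteq> G" by blast
  show "C' \<inter> E' = {}"
    using occurrence_net_disjoint[OF occ] assms(2,3) by blast
  show "?G' \<subseteq> C' \<times> E' \<union> E' \<times> C'"
    using occurrence_net_arcs[OF occ] occurrence_net_disjoint[OF occ] assms(2,3) by blast
  show "\<not> lessN ?G' x x" for x
    using occurrence_net_irrefl[OF occ] lessN_mono[OF sub] by blast
  show "finite {y. lessN ?G' y x}" for x
    using occurrence_net_finite_past[OF occ, of x] lessN_mono[OF sub]
    by (metis (no_types, lifting) finite_subset mem_Collect_eq subsetI)
  show "\<not> conflict E' ?G' x x" if "x \<in> C' \<union> E'" for x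
    using occurrence_net_no_self_conflict[OF occ] that assms(2,3) conflict_mono[OF assms(3) sub]
    by blast
  fix c assume "c \<in> C'"
  then have "finite (preN G c)" "card (preN G c) \<le> 1"
    using occ assms(2) unfolding occurrence_net_def by auto
  moreover have "preN ?G' c \<subseteq> preN G c"
    unfolding preN_def by blast
  ultimately show "finite (preN ?G' c)" "card (preN ?G' c) \<le> 1"
    by (auto intro: card_mono finite_subset le_trans)
qed

lemma complete_prefix_occurrence_net:
  assumes "occurrence_net C E G" "complete_prefix C E G hC = (Cp, Ep, Gp)"
  shows "occurrence_net Cp Ep Gp"
proof -
  have "Cp \<subseteq> C" "Ep \<subseteq> E" "Gp = G \<inter> ((Cp \<union> Ep) \<times> (Cp \<union> Ep))"
    using assms(2) unfolding complete_prefix_def Let_def by auto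
  then show ?thesis
    using occurrence_net_restrict[OF assms(1)] by simp
qed

lemma configuration_loc:
  assumes occ: "occurrence_net C E G" and "e \<in> E"
  shows "configuration E G (loc E G e)"
  unfolding configuration_def
proof (intro conjI ballI impI)
  show "loc E G e \<subseteq> E"
    unfolding loc_def by blast
  have "loc E G e \<subseteq> insert e {y. lessN G y e}"
    unfolding loc_def leqN_def by blast
  then show "finite (loc E G e)"
    using occurrence_net_finite_past[OF occ] by (simp add: finite_subset)
  show "e' \<in> loc E G e" if "x \<in> loc E G e" "e' \<in> E" "lessN G e' x" for x e'
    using that lessN_trans[of G e' x e] unfolding loc_def leqN_def by auto
  have "\<not> conflict E G e e"
    using occurrence_net_no_self_conflict[OF occ] \<open>e \<in> E\<close> by blast
  then show "\<not> conflict E G x y" if "x \<in> loc E G e" "y \<in> loc E G e" for x y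
    using that conflict_leqN_mono[of E G x y e e] unfolding loc_def by auto
qed

lemma configuration_remove_maximal:
  assumes "configuration E G K" "\<forall>e' \<in> K. \<not> lessN G e e'"
  shows "configuration E G (K - {e})"
  using assms unfolding configuration_def by auto

lemma past_eq_loc_remove:
  assumes "occurrence_net C E G"
  shows "past E G e = loc E G e - {e}"
  using occurrence_net_irrefl[OF assms, of e] unfolding past_def loc_def leqN_def by auto

lemma configuration_past:
  assumes occ: "occurrence_net C E G" and "e \<in> E"
  shows "configuration E G (past E G e)"
proof -
  have "\<not> lessN G e e'" if "e' \<in> loc E G e" for e'
    using that occurrence_net_irrefl[OF occ] lessN_trans[of G e e' e]
    unfolding loc_def leqN_def by auto
  then show ?thesis
    using configuration_remove_maximal[OF configuration_loc[OF assms]]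
    by (simp add: past_eq_loc_remove[OF occ])
qed

lemma insert_past_eq_loc: "e \<in> E \<Longrightarrow> insert e (past E G e) = loc E G e"
  unfolding past_def loc_def leqN_def by blast

lemma lessN_two_arcs: "(x, y) \<in> G \<Longrightarrow> (y, z) \<in> G \<Longrightarrow> lessN G x z"
  unfolding lessN_def by (meson r_into_trancl trancl_into_trancl)

lemma pre_subset_Cut:
  assumes occ: "occurrence_net C E G"
    and K: "configuration E G K" and L: "configuration E G (insert e K)"
    and "e \<in> E" "e \<notin> K"
  shows "preN G e \<subseteq> Cut C G K"
proof
  fix c assume "c \<in> preN G e"
  then have ce: "(c, e) \<in> G" by (simp add: preN_def)
  then have "c \<in> C"
    using occurrence_net_arcs[OF occ] occurrence_net_disjoint[OF occ] \<open>e \<in> E\<close> by blast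
  have "c \<in> MinO C G \<union> postS G K"
  proof (cases "preN G c = {}")
    case True
    then show ?thesis using \<open>c \<in> C\<close> by (simp add: MinO_def)
  next
    case False
    then obtain f where fc: "(f, c) \<in> G" by (auto simp: preN_def)
    then have "f \<in> E"
      using occurrence_net_arcs[OF occ] occurrence_net_disjoint[OF occ] \<open>c \<in> C\<close> by blast
    moreover have "lessN G f e" "f \<noteq> e"
      using lessN_two_arcs[OF fc ce] occurrence_net_irrefl[OF occ] by auto
    ultimately have "f \<in> K"
      using L unfolding configuration_def by blast
    then show ?thesis using fc by (auto simp: postS_def postN_def)
  qed
  moreover have "c \<notin> preS G K"
  proof
    assume "c \<in> preS G K"
    then obtain e' where "e' \<in> K" "(c, e') \<in> G" by (auto simp: preS_def preN_def)
    moreover have "e' \<in> E" "e' \<noteq> e"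
      using K \<open>e' \<in> K\<close> \<open>e \<notin> K\<close> unfolding configuration_def by auto
    \<comment> \<open>e and e' would share the input condition c\<close>
    ultimately have "conflict E G e e'"
      using \<open>e \<in> E\<close> ce unfolding conflict_def leqN_def preN_def by blast
    then show False using L \<open>e' \<in> K\<close> unfolding configuration_def by blast
  qed
  ultimately show "c \<in> Cut C G K" by (simp add: Cut_def)
qed

lemma occ_step_Cut_insert:
  assumes occ: "occurrence_net C E G"
    and "configuration E G K" "configuration E G (insert e K)"
    and "e \<in> E" "e \<notin> K" and maximal: "\<forall>e' \<in> K. \<not> lessN G e e'"
  shows "occ_step E G (Cut C G K) e (Cut C G (insert e K))"
proof -
  have "postN G e \<inter> preS G K = {}"
    using maximal lessN_two_arcs[of e _ G] unfolding postN_def preS_def preN_def by blast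
  moreover have "postN G e \<inter> preN G e = {}"
    using occurrence_net_irrefl[OF occ] lessN_two_arcs[of e _ G e]
    unfolding postN_def preN_def by blast
  moreover have "preS G (insert e K) = preN G e \<union> preS G K"
    and "postS G (insert e K) = postN G e \<union> postS G K"
    by (auto simp: preS_def postS_def)
  ultimately show ?thesis
    using pre_subset_Cut[OF assms(1-5)] \<open>e \<in> E\<close> unfolding occ_step_def Cut_def by blast
qed

lemma lessN_event_leqN_pre_pre:
  assumes occ: "occurrence_net C E G" and "e \<in> E" "e' \<in> E" "lessN G e' e"
  shows "\<exists>f \<in> preS G (preN G e). leqN G e' f"
proof -
  obtain c where c: "(e', c) \<in> G\<^sup>*" "(c, e) \<in> G"
    using \<open>lessN G e' e\<close> tranclD2 unfolding lessN_def by metis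
  have "c \<noteq> e'"
    using c(2) occurrence_net_arcs[OF occ] occurrence_net_disjoint[OF occ] \<open>e \<in> E\<close> \<open>e' \<in> E\<close>
    by blast
  then obtain f where "(e', f) \<in> G\<^sup>*" "(f, c) \<in> G"
    using rtranclE[OF c(1)] by metis
  then show ?thesis
    using c(2) unfolding preS_def preN_def leqN_def lessN_def
    by (auto simp: rtrancl_eq_or_trancl)
qed

lemma max_adj_maximal_in_past:
  assumes occ: "occurrence_net C E G" and "e2 \<in> E" "max_adj G e1 e2"
  shows "\<forall>e' \<in> past E G e2. \<not> lessN G e1 e'"
proof (intro ballI notI)
  fix e' assume "e' \<in> past E G e2" "lessN G e1 e'"
  then obtain f where "f \<in> preS G (preN G e2)" "leqN G e' f"
    using lessN_event_leqN_pre_pre[OF occ \<open>e2 \<in> E\<close>] unfolding past_def by blast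
  moreover have "lessN G e1 f"
    using \<open>lessN G e1 e'\<close> \<open>leqN G e' f\<close> lessN_trans[of G e1 e' f] unfolding leqN_def by auto
  ultimately show False
    using \<open>max_adj G e1 e2\<close> unfolding max_adj_def MaxE_def by blast
qed

lemma ear_if_max_adj:
  assumes occ: "occurrence_net C E G" and "e1 \<in> E" "e2 \<in> E" "max_adj G e1 e2"
  shows "ear C E G hC e1 e2"
proof -
  let ?K = "past E G e2"
  have "e1 \<in> ?K" "e2 \<notin> ?K"
    using assms occurrence_net_irrefl[OF occ] unfolding max_adj_def past_def by auto
  have e1_maximal: "\<forall>e' \<in> ?K. \<not> lessN G e1 e'"
    using max_adj_maximal_in_past[OF occ \<open>e2 \<in> E\<close> \<open>max_adj G e1 e2\<close>] .
  have e2_maximal: "\<forall>e' \<in> ?K. \<not> lessN G e2 e'"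
    using occurrence_net_irrefl[OF occ] lessN_trans[of G e2 _ e2] unfolding past_def by blast
  have K: "configuration E G ?K"
    using configuration_past[OF occ \<open>e2 \<in> E\<close>] .
  have K_minus: "configuration E G (?K - {e1})"
    using configuration_remove_maximal[OF K e1_maximal] .
  have K_plus: "configuration E G (insert e2 ?K)"
    using configuration_loc[OF occ \<open>e2 \<in> E\<close>] insert_past_eq_loc[OF \<open>e2 \<in> E\<close>] by simp
  have "occ_step E G (Cut C G (?K - {e1})) e1 (Cut C G ?K)"
    using occ_step_Cut_insert[OF occ K_minus _ \<open>e1 \<in> E\<close>] K e1_maximal \<open>e1 \<in> ?K\<close>
    by (simp add: insert_absorb)
  moreover have "occ_step E G (Cut C G ?K) e2 (Cut C G (insert e2 ?K))"
    using occ_step_Cut_insert[OF occ K K_plus \<open>e2 \<in> E\<close> \<open>e2 \<notin> ?K\<close> e2_maximal] .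
  moreover have "reach_mark C E G (Cut C G X)" if "configuration E G X" for X
    using that unfolding reach_mark_def by blast
  ultimately show ?thesis
    using K K_minus K_plus unfolding ear_def by blast
qed

theorem proposition5:
  fixes P :: "'p set" and T :: "'t set" and Fin :: "('p \<times> 't) set"
    and Fout :: "('t \<times> 'p) set" and M0 :: "'p \<Rightarrow> nat"
    and C E :: "'n set" and G :: "('n \<times> 'n) set" and hC :: "'n \<Rightarrow> 'p" and hE :: "'n \<Rightarrow> 't"
  assumes "net_system P T Fin Fout M0"
    and "bounded_system T Fin Fout M0"
    and "is_unfolding P T Fin Fout M0 C E G hC hE"
    and "complete_prefix C E G hC = (Cp, Ep, Gp)"
    and "e1 \<in> Ep" and "e2 \<in> Ep"
    and "max_adj Gp e1 e2"
  shows "ear Cp Ep Gp hC e1 e2"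
proof -
  have "occurrence_net C E G"
    using assms(3) by (simp add: is_unfolding_def branching_process_def)
  then have "occurrence_net Cp Ep Gp"
    by (rule complete_prefix_occurrence_net[OF _ assms(4)])
  then show ?thesis
    by (rule ear_if_max_adj[OF _ assms(5-7)])
qed

end
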